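(* In the safe linear bandit setting with ROFUL as described in the context, suppose $\mathcal{X}$ is star-convex with respect to the origin, $\|x\|\le1$ on $\mathcal{X}$ and $\theta^\top x_*>0$. Then on the event $\mathcal{E}_{\mathrm{conf}}$, for all $t\in[T]$, $$\gamma_t\ge\max\left(1-\frac{2}{b}\beta_t\|x_t\|_{V_t^{-1}},\ \nu\right).$$
   Context: Safe linear bandit setting: at round $t$ the learner plays $x_t$ in a closed set $\mathcal{X}\subseteq\mathbb{R}^d$ and observes $y_t=\theta^\top x_t+\epsilon_t$, $z_t=a^\top x_t+\eta_t$, with $\theta,a$ unknown and $b>0$ known; $\mathcal{Y}=\{x\in\mathcal{X}:a^\top x\le b\}$, $x_*\in\arg\max_{\mathcal{Y}}\theta^\top x$. Constants: $S_a\ge\|a\|$, $S_\theta\ge\|\theta\|$, $S=\max(S_a,S_\theta)$, $\nu=b/S_a\le1$, $\rho>0$, $\delta\in(0,1)$, $\lambda\ge1$. ROFUL: $V_t=\lambda I+\sum_{k<t}x_kx_k^\top$, $\hat a_t=V_t^{-1}\sum_{k<t}x_kz_k$, $\hat\theta_t=V_t^{-1}\sum_{k<t}x_ky_k$, $\beta_t=\rho\sqrt{d\log\left(\frac{1+(t-1)/\lambda}{\delta/2}\right)}+\sqrt\lambda S$, $\|x\|_M=\sqrt{x^\top Mx}$; $\mathcal{Y}_t^p=\{x\in\mathcal{X}:\hat a_t^\top x+\beta_t\|x\|_{V_t^{-1}}\le b\}$, $\mathcal{Y}_t^o=\{x\in\mathcal{X}:\hat a_t^\top x-\beta_t\|x\|_{V_t^{-1}}\le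 b\}$; $\tilde x_t\in\arg\max_{x\in\mathcal{Y}_t^o}(\hat\theta_t^\top x+\beta_t\|x\|_{V_t^{-1}})$; $\tilde b_t=\min(\nu/\|\tilde x_t\|,1)$, $\mu_t=\max\{\mu\in[0,1]:\mu\tilde x_t\in\mathcal{Y}_t^p\}$, $\gamma_t=\max(\tilde b_t,\mu_t)$; play $x_t=\gamma_t\tilde x_t$. $\mathcal{E}_{\mathrm{conf}}$: the event that $|x^\top(\hat\theta_t-\theta)|\le\beta_t\|x\|_{V_t^{-1}}$ and $|x^\top(\hat a_t-a)|\le\beta_t\|x\|_{V_t^{-1}}$ for all $x\in\mathcal{X}$ and all $t\ge1$. *)

theory Defs
  imports "HOL-Analysis.Analysis"
begin

text \<open>Vectors in R^d are \<open>real^'n\<close>, d = CARD('n). Rounds are indexed t = 1, 2, ...\<close>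

definition star_convex_origin :: "('a::real_vector) set \<Rightarrow> bool" where
  "star_convex_origin X \<longleftrightarrow> (\<forall>x\<in>X. closed_segment 0 x \<subseteq> X)"

definition outer :: "real^'n \<Rightarrow> real^'n^'n" where
  "outer v = (\<chi> i j. v$i * v$j)"

definition Vmat :: "real \<Rightarrow> (nat \<Rightarrow> real^'n) \<Rightarrow> nat \<Rightarrow> real^'n^'n" where
  "Vmat lam x t = scaleR lam (mat 1) + (\<Sum>k\<in>{1..<t}. outer (x k))"

definition Vinv :: "real \<Rightarrow> (nat \<Rightarrow> real^'n) \<Rightarrow> nat \<Rightarrow> real^'n^'n" where
  "Vinv lam x t = matrix_inv (Vmat lam x t)"

definition wnorm :: "real^'n^'n \<Rightarrow> real^'n \<Rightarrow> real" where
  "wnorm M v = sqrt (v \<bullet> (M *v v))"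

text \<open>regularised least-squares estimate from observations w (used for both a-hat and theta-hat)\<close>
definition est :: "real \<Rightarrow> (nat \<Rightarrow> real^'n) \<Rightarrow> (nat \<Rightarrow> real) \<Rightarrow> nat \<Rightarrow> real^'n" where
  "est lam x w t = Vinv lam x t *v (\<Sum>k\<in>{1..<t}. w k *\<^sub>R x k)"

definition beta :: "real \<Rightarrow> nat \<Rightarrow> real \<Rightarrow> real \<Rightarrow> real \<Rightarrow> nat \<Rightarrow> real" where
  "beta rho d delta lam S t =
     rho * sqrt (real d * ln ((1 + (real t - 1) / lam) / (delta / 2))) + sqrt lam * S"

definition Yp :: "(real^'n) set \<Rightarrow> real \<Rightarrow> real^'n \<Rightarrow> real^'n^'n \<Rightarrow> real \<Rightarrow> (real^'n) set" where
  "Yp X b ah Mi bt = {v\<in>X. ah \<bullet> v + bt * wnorm Mi v \<le> b}"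

definition Yo :: "(real^'n) set \<Rightarrow> real \<Rightarrow> real^'n \<Rightarrow> real^'n^'n \<Rightarrow> real \<Rightarrow> (real^'n) set" where
  "Yo X b ah Mi bt = {v\<in>X. ah \<bullet> v - bt * wnorm Mi v \<le> b}"

text \<open>b-tilde = min(nu/||v||, 1), with the convention nu/0 = +infinity (so value 1 at v = 0)\<close>
definition btil :: "real \<Rightarrow> real^'n \<Rightarrow> real" where
  "btil nu v = (if norm v = 0 then 1 else min (nu / norm v) 1)"

definition mu_of :: "(real^'n) set \<Rightarrow> real \<Rightarrow> real^'n \<Rightarrow> real^'n^'n \<Rightarrow> real \<Rightarrow> real^'n \<Rightarrow> real" where
  "mu_of X b ah Mi bt v = (GREATEST m. m \<in> {0..1} \<and> m *\<^sub>R v \<in> Yp X b ah Mi bt)"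

end

theory Submission
  imports Defs
begin

text \<open>Let \<open>v\<close> be the optimistic action and \<open>c = a_hat\<bullet>v + \<beta> \<parallel>v\<parallel>\<close> its pessimistic
  constraint value. By star-convexity the segment from 0 to \<open>v\<close> lies in \<open>X\<close>, and the
  constraint is linear along it, so \<open>\<mu> = 1\<close> if \<open>c \<le> b\<close> and \<open>\<mu> = b / c\<close> otherwise.
  Membership of \<open>v\<close> in the optimistic safe set gives \<open>c \<le> b + 2 \<beta> \<parallel>v\<parallel>\<close>, hence
  \<open>\<gamma> (b + 2 \<beta> \<parallel>v\<parallel>) \<ge> b\<close>, which rearranges to the claim because the played action is
  \<open>\<gamma> v\<close>. The bound \<open>\<gamma> \<ge> \<nu>\<close> comes from \<open>b_tilde \<ge> \<nu>\<close> and \<open>\<parallel>v\<parallel> \<le> 1\<close>.\<close>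

lemma wnorm_scaleR: "wnorm M (m *\<^sub>R v) = \<bar>m\<bar> * wnorm M v"
proof -
  have "(m *\<^sub>R v) \<bullet> (M *v (m *\<^sub>R v)) = m\<^sup>2 * (v \<bullet> (M *v v))"
    by (simp add: matrix_vector_mult_scaleR power2_eq_square)
  then show ?thesis unfolding wnorm_def by (simp add: real_sqrt_mult)
qed

lemma star_convex_origin_scaleR:
  assumes "star_convex_origin X" "v \<in> X" "0 \<le> m" "m \<le> 1"
  shows "m *\<^sub>R v \<in> X"
  using assms unfolding star_convex_origin_def closed_segment_def by fastforce

lemma btil_bounds:
  assumes "0 < nu" "nu \<le> 1" "norm v \<le> 1"
  shows "nu \<le> btil nu v" "btil nu v \<le> 1"
proof -
  have "nu \<le> nu / norm v" if "norm v \<noteq> 0"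
    using that assms by (simp add: le_divide_eq mult_left_le)
  then show "nu \<le> btil nu v" "btil nu v \<le> 1"
    using assms(2) unfolding btil_def by auto
qed

lemma scaleR_mem_Yp_iff:
  assumes "star_convex_origin X" "v \<in> X" "0 \<le> m" "m \<le> 1"
  shows "m *\<^sub>R v \<in> Yp X b A M B \<longleftrightarrow> m * (A \<bullet> v + B * wnorm M v) \<le> b"
  using assms star_convex_origin_scaleR[OF assms]
  by (simp add: Yp_def wnorm_scaleR algebra_simps)

lemma mu_of_eq:
  fixes v A :: "real^'n" and M :: "real^'n^'n" and B b :: real
  assumes X: "star_convex_origin X" "v \<in> X" and b: "b > 0"
  defines "c \<equiv> A \<bullet> v + B * wnorm M v"
  shows "mu_of X b A M B v = (if c \<le> b then 1 else b / c)"
proof -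
  define m0 where "m0 = (if c \<le> b then 1 else b / c)"
  have "mu_of X b A M B v = m0"
    unfolding mu_of_def
  proof (rule Greatest_equality)
    show "m0 \<in> {0..1} \<and> m0 *\<^sub>R v \<in> Yp X b A M B"
      using b by (auto simp: scaleR_mem_Yp_iff[OF X] c_def m0_def)
  next
    fix m assume "m \<in> {0..1} \<and> m *\<^sub>R v \<in> Yp X b A M B"
    then have "0 \<le> m" "m \<le> 1" "m * c \<le> b"
      by (auto simp: scaleR_mem_Yp_iff[OF X] c_def)
    then show "m \<le> m0"
      using b by (auto simp: pos_le_divide_eq m0_def)
  qed
  then show ?thesis by (simp add: m0_def)
qed

lemma mu_of_Yo_lower_bound:
  assumes X: "star_convex_origin X" and v: "v \<in> Yo X b A M B" and b: "b > 0"
    and Bw: "B * wnorm M v \<ge> 0"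
  shows "b \<le> mu_of X b A M B v * (b + 2 * (B * wnorm M v))"
proof -
  define c where "c = A \<bullet> v + B * wnorm M v"
  have vX: "v \<in> X" and c_le: "c \<le> b + 2 * (B * wnorm M v)"
    using v unfolding Yo_def c_def by auto
  show ?thesis
  proof (cases "c \<le> b")
    case True
    then show ?thesis using Bw mu_of_eq[OF X vX b] by (simp add: c_def)
  next
    case False
    then have "c > 0" using b by simp
    then have "b / c * c \<le> b / c * (b + 2 * (B * wnorm M v))"
      using b c_le by (intro mult_left_mono) auto
    then show ?thesis using False \<open>c > 0\<close> mu_of_eq[OF X vX b] by (simp add: c_def)
  qed
qed

text \<open>The sign hypothesis on \<open>B * wnorm M v\<close> is not automatic: \<open>sqrt\<close> is odd on the reals,
  so \<open>wnorm M v\<close> is negative when \<open>M\<close> is indefinite at \<open>v\<close>.\<close>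

lemma roful_scale_lower_bound:
  fixes v :: "real^'n"
  assumes X: "star_convex_origin X" "\<forall>u\<in>X. norm u \<le> 1"
    and v: "v \<in> Yo X b A M B" and b: "b > 0"
    and Bw: "B * wnorm M v \<ge> 0"
    and nu: "0 < nu" "nu \<le> 1"
  defines "g \<equiv> max (btil nu v) (mu_of X b A M B v)"
  shows "max (1 - 2 / b * B * wnorm M (g *\<^sub>R v)) nu \<le> g"
proof -
  have vX: "v \<in> X" using v unfolding Yo_def by simp
  have btil: "nu \<le> btil nu v" "btil nu v \<le> 1"
    using btil_bounds[OF nu] X(2) vX by auto
  have "mu_of X b A M B v \<le> 1"
    using mu_of_eq[OF X(1) vX b] b by (auto simp: field_simps)
  then have g: "nu \<le> g" "g \<le> 1"
    using btil unfolding g_def by auto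
  have "b \<le> mu_of X b A M B v * (b + 2 * (B * wnorm M v))"
    by (rule mu_of_Yo_lower_bound[OF X(1) v b Bw])
  also have "\<dots> \<le> g * (b + 2 * (B * wnorm M v))"
    using Bw b unfolding g_def by (intro mult_right_mono) auto
  finally have "1 - 2 * (g * (B * wnorm M v)) / b \<le> g"
    using b by (simp add: field_simps)
  moreover have "wnorm M (g *\<^sub>R v) = g * wnorm M v"
    using g nu by (simp add: wnorm_scaleR)
  ultimately show ?thesis
    using g by (simp add: mult.commute mult.left_commute)
qed

theorem lemma2:
  fixes X :: "(real^'n) set"
    and theta a xstar :: "real^'n"
    and b S_a S_theta S nu rho delta lam :: real
    and x xtil :: "nat \<Rightarrow> real^'n"
    and y z :: "nat \<Rightarrow> real"
    and T :: nat
  defines "V' \<equiv> Vinv lam x"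
    and "bt \<equiv> beta rho CARD('n) delta lam S"
    and "ah \<equiv> est lam x z"
    and "th \<equiv> est lam x y"
    and "gam \<equiv> (\<lambda>t. max (btil nu (xtil t)) (mu_of X b (est lam x z t) (Vinv lam x t) (beta rho CARD('n) delta lam S t) (xtil t)))"
  assumes X_closed: "closed X"
    and X_star: "star_convex_origin X"
    and X_bound: "\<forall>v\<in>X. norm v \<le> 1"
    and b_pos: "b > 0"
    and Sa: "S_a \<ge> norm a" and Sa_pos: "S_a > 0"
    and Sth: "S_theta \<ge> norm theta"
    and S_def: "S = max S_a S_theta"
    and nu_def: "nu = b / S_a" and nu_le: "nu \<le> 1"
    and rho_pos: "rho > 0"
    and delta: "0 < delta" "delta < 1"
    and lam: "lam \<ge> 1"
    and xstar_Y: "xstar \<in> X" "a \<bullet> xstar \<le> b"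
    and xstar_opt: "\<forall>v\<in>X. a \<bullet> v \<le> b \<longrightarrow> theta \<bullet> v \<le> theta \<bullet> xstar"
    and xstar_pos: "theta \<bullet> xstar > 0"
    and xtil_mem: "\<forall>t\<ge>1. xtil t \<in> Yo X b (ah t) (V' t) (bt t)"
    and xtil_opt: "\<forall>t\<ge>1. \<forall>v\<in>Yo X b (ah t) (V' t) (bt t).
        th t \<bullet> v + bt t * wnorm (V' t) v \<le> th t \<bullet> xtil t + bt t * wnorm (V' t) (xtil t)"
    and play: "\<forall>t\<ge>1. x t = gam t *\<^sub>R xtil t"
    and conf: "\<forall>t\<ge>1. \<forall>v\<in>X.
        \<bar>v \<bullet> (th t - theta)\<bar> \<le> bt t * wnorm (V' t) v \<and>
        \<bar>v \<bullet> (ah t - a)\<bar> \<le> bt t * wnorm (V' t) v"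
  shows "\<forall>t\<in>{1..T}. gam t \<ge> max (1 - 2 / b * bt t * wnorm (V' t) (x t)) nu"
proof
  fix t assume "t \<in> {1..T}"
  then have t: "t \<ge> 1" by simp
  have xtil_Yo: "xtil t \<in> Yo X b (ah t) (V' t) (bt t)"
    using xtil_mem t by simp
  then have "xtil t \<in> X" unfolding Yo_def by simp
  then have "\<bar>xtil t \<bullet> (th t - theta)\<bar> \<le> bt t * wnorm (V' t) (xtil t)"
    using conf t by blast
  then have "bt t * wnorm (V' t) (xtil t) \<ge> 0"
    by (rule order_trans[OF abs_ge_zero])
  moreover have "0 < nu" using nu_def b_pos Sa_pos by simp
  ultimately have bound: "max (1 - 2 / b * bt t * wnorm (V' t) (gam t *\<^sub>R xtil t)) nu \<le> gam t"
    using roful_scale_lower_bound[OF X_star X_bound xtil_Yo b_pos _ _ nu_le]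
    unfolding gam_def ah_def V'_def bt_def by blast
  show "gam t \<ge> max (1 - 2 / b * bt t * wnorm (V' t) (x t)) nu"
    using bound play t by simp
qed

end
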